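(* Let $S$ and $T$ be ordered forests, let $A$ be a non-empty finite linear order, and let $i\colon S\to T$ be a tree embedding. Then there exists an $A$-rigid surjection $s\colon A\oplus T\to A\oplus S$ such that the restriction to $S$ of the injection of $s$ is equal to $i$.
   Context: A tree is a finite, non-empty poset with a smallest element (root) in which the predecessors of each element form a chain. An ordered tree has a linear order on the immediate successors of each node, inducing the lexicographic order $\leq$ ($v\leq w$ if $v\sqsubseteq w$; for incomparable $v,w$, compare the immediate successors of $v\wedge w$ lying below $v$ and $w$). A forest is a finite poset in which the predecessors of each element form a chain; $1\oplus T$ is the tree obtained by adding a new root below everything. An ordered forest is a forest $T$ with a linear order $\leq_T$ that is the restriction of the lexicographic order of some ordered-tree structure on $1\oplus T$. A tree embedding $S\to T$ of ordered forests is a function extending to an embedding $1\oplus S\to 1\oplus T$. For a non-empty linear order $A$ and an ordered forest $T$, $A\oplus T$ is the ordered tree obtained by placing $T$ above $\max A$ (minimal elements of $T$ become immediate successors of $\max A$), with linear order putting $T$ after $A$. A morphism $e$ of ordered trees preserves $\wedge$, is $\leq$-monotone and maps root to root; an embedding is an injective morphism. A rigid surjection $f\colon T\to S$ is a function for which there is a morphism $e\colon S\to T$ (its injection) with $f\circ e={\rm id}_S$ and $e(f(w))\sqsubseteq_T w$ for all $w$. An $A$-rigid surjection $t\colon A\oplus T\to A\oplus S$ is a rigid surjection with $t\upharpoonright A={\rm id}_A$. *)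

theory Defs
  imports Main
begin

definition porder_on :: "'a set \<Rightarrow> ('a \<Rightarrow> 'a \<Rightarrow> bool) \<Rightarrow> bool" where
  "porder_on T le \<longleftrightarrow>
     (\<forall>x\<in>T. le x x) \<and>
     (\<forall>x\<in>T. \<forall>y\<in>T. le x y \<and> le y x \<longrightarrow> x = y) \<and>
     (\<forall>x\<in>T. \<forall>y\<in>T. \<forall>z\<in>T. le x y \<and> le y z \<longrightarrow> le x z)"

definition linorder_on :: "'a set \<Rightarrow> ('a \<Rightarrow> 'a \<Rightarrow> bool) \<Rightarrow> bool" where
  "linorder_on T le \<longleftrightarrow> porder_on T le \<and> (\<forall>x\<in>T. \<forall>y\<in>T. le x y \<or> le y x)"

definition forest :: "'a set \<Rightarrow> ('a \<Rightarrow> 'a \<Rightarrow> bool) \<Rightarrow> bool" where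
  "forest T le \<longleftrightarrow> finite T \<and> porder_on T le \<and>
     (\<forall>w\<in>T. \<forall>u\<in>T. \<forall>v\<in>T. le u w \<and> le v w \<longrightarrow> le u v \<or> le v u)"

definition tree :: "'a set \<Rightarrow> ('a \<Rightarrow> 'a \<Rightarrow> bool) \<Rightarrow> bool" where
  "tree T le \<longleftrightarrow> forest T le \<and> T \<noteq> {} \<and> (\<exists>r\<in>T. \<forall>w\<in>T. le r w)"

definition troot :: "'a set \<Rightarrow> ('a \<Rightarrow> 'a \<Rightarrow> bool) \<Rightarrow> 'a" where
  "troot T le = (THE r. r \<in> T \<and> (\<forall>w\<in>T. le r w))"

definition tmeet :: "'a set \<Rightarrow> ('a \<Rightarrow> 'a \<Rightarrow> bool) \<Rightarrow> 'a \<Rightarrow> 'a \<Rightarrow> 'a" where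
  "tmeet T le v w = (THE m. m \<in> T \<and> le m v \<and> le m w \<and>
                        (\<forall>u\<in>T. le u v \<and> le u w \<longrightarrow> le u m))"

definition isucc :: "'a set \<Rightarrow> ('a \<Rightarrow> 'a \<Rightarrow> bool) \<Rightarrow> 'a \<Rightarrow> 'a \<Rightarrow> bool" where
  "isucc T le v w \<longleftrightarrow> v \<in> T \<and> w \<in> T \<and> le v w \<and> v \<noteq> w \<and>
     (\<forall>u\<in>T. le v u \<and> le u w \<longrightarrow> u = v \<or> u = w)"

definition sibling_orders :: "'a set \<Rightarrow> ('a \<Rightarrow> 'a \<Rightarrow> bool) \<Rightarrow> ('a \<Rightarrow> 'a \<Rightarrow> 'a \<Rightarrow> bool) \<Rightarrow> bool" where
  "sibling_orders T le sib \<longleftrightarrow> (\<forall>v\<in>T. linorder_on {w. isucc T le v w} (sib v))"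

definition lex :: "'a set \<Rightarrow> ('a \<Rightarrow> 'a \<Rightarrow> bool) \<Rightarrow> ('a \<Rightarrow> 'a \<Rightarrow> 'a \<Rightarrow> bool) \<Rightarrow> 'a \<Rightarrow> 'a \<Rightarrow> bool" where
  "lex T le sib v w \<longleftrightarrow> le v w \<or>
     (\<not> le v w \<and> \<not> le w v \<and>
       (\<exists>v' w'. isucc T le (tmeet T le v w) v' \<and> isucc T le (tmeet T le v w) w' \<and>
                le v' v \<and> le w' w \<and> sib (tmeet T le v w) v' w'))"

text \<open>An ordered tree, represented by its tree order le and the lexicographic
  order lo induced by some ordered-tree structure.\<close>
definition ordered_tree :: "'a set \<Rightarrow> ('a \<Rightarrow> 'a \<Rightarrow> bool) \<Rightarrow> ('a \<Rightarrow> 'a \<Rightarrow> bool) \<Rightarrow> bool" where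
  "ordered_tree T le lo \<longleftrightarrow> tree T le \<and>
     (\<exists>sib. sibling_orders T le sib \<and> (\<forall>v\<in>T. \<forall>w\<in>T. lo v w \<longleftrightarrow> lex T le sib v w))"

definition one_plus :: "'a set \<Rightarrow> 'a option set" where
  "one_plus T = insert None (Some ` T)"

definition one_plus_rel :: "('a \<Rightarrow> 'a \<Rightarrow> bool) \<Rightarrow> 'a option \<Rightarrow> 'a option \<Rightarrow> bool" where
  "one_plus_rel r x y = (case x of None \<Rightarrow> True
      | Some a \<Rightarrow> (case y of None \<Rightarrow> False | Some b \<Rightarrow> r a b))"

text \<open>Ordered forest: forest with a linear order which is the restriction of the lexicographic
  order of some ordered-tree structure on 1 \<oplus> T.\<close>
definition ordered_forest :: "'a set \<Rightarrow> ('a \<Rightarrow> 'a \<Rightarrow> bool) \<Rightarrow> ('a \<Rightarrow> 'a \<Rightarrow> bool) \<Rightarrow> bool" where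
  "ordered_forest T le lo \<longleftrightarrow> forest T le \<and>
     ordered_tree (one_plus T) (one_plus_rel le) (one_plus_rel lo)"

definition a_plus :: "'c set \<Rightarrow> 'a set \<Rightarrow> ('c + 'a) set" where
  "a_plus A T = Inl ` A \<union> Inr ` T"

text \<open>Both the tree order and the linear order of A \<oplus> T: A is a chain, T sits above max A
  and comes after A.\<close>
definition a_plus_rel :: "('c \<Rightarrow> 'c \<Rightarrow> bool) \<Rightarrow> ('a \<Rightarrow> 'a \<Rightarrow> bool) \<Rightarrow> ('c + 'a) \<Rightarrow> ('c + 'a) \<Rightarrow> bool" where
  "a_plus_rel rA r x y = (case x of
       Inl a \<Rightarrow> (case y of Inl b \<Rightarrow> rA a b | Inr _ \<Rightarrow> True)
     | Inr s \<Rightarrow> (case y of Inl _ \<Rightarrow> False | Inr t \<Rightarrow> r s t))"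

definition ot_morphism ::
  "'a set \<Rightarrow> ('a \<Rightarrow> 'a \<Rightarrow> bool) \<Rightarrow> ('a \<Rightarrow> 'a \<Rightarrow> bool) \<Rightarrow>
   'b set \<Rightarrow> ('b \<Rightarrow> 'b \<Rightarrow> bool) \<Rightarrow> ('b \<Rightarrow> 'b \<Rightarrow> bool) \<Rightarrow> ('a \<Rightarrow> 'b) \<Rightarrow> bool" where
  "ot_morphism S leS loS T leT loT e \<longleftrightarrow>
     e ` S \<subseteq> T \<and>
     (\<forall>v\<in>S. \<forall>w\<in>S. e (tmeet S leS v w) = tmeet T leT (e v) (e w)) \<and>
     (\<forall>v\<in>S. \<forall>w\<in>S. loS v w \<longrightarrow> loT (e v) (e w)) \<and>
     e (troot S leS) = troot T leT"

definition ot_embedding ::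
  "'a set \<Rightarrow> ('a \<Rightarrow> 'a \<Rightarrow> bool) \<Rightarrow> ('a \<Rightarrow> 'a \<Rightarrow> bool) \<Rightarrow>
   'b set \<Rightarrow> ('b \<Rightarrow> 'b \<Rightarrow> bool) \<Rightarrow> ('b \<Rightarrow> 'b \<Rightarrow> bool) \<Rightarrow> ('a \<Rightarrow> 'b) \<Rightarrow> bool" where
  "ot_embedding S leS loS T leT loT e \<longleftrightarrow> ot_morphism S leS loS T leT loT e \<and> inj_on e S"

definition tree_embedding ::
  "'a set \<Rightarrow> ('a \<Rightarrow> 'a \<Rightarrow> bool) \<Rightarrow> ('a \<Rightarrow> 'a \<Rightarrow> bool) \<Rightarrow>
   'b set \<Rightarrow> ('b \<Rightarrow> 'b \<Rightarrow> bool) \<Rightarrow> ('b \<Rightarrow> 'b \<Rightarrow> bool) \<Rightarrow> ('a \<Rightarrow> 'b) \<Rightarrow> bool" where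
  "tree_embedding S leS loS T leT loT i \<longleftrightarrow> i ` S \<subseteq> T \<and>
     (\<exists>e. ot_embedding (one_plus S) (one_plus_rel leS) (one_plus_rel loS)
                        (one_plus T) (one_plus_rel leT) (one_plus_rel loT) e \<and>
          (\<forall>x\<in>S. e (Some x) = Some (i x)))"

definition rigid_surj_inj ::
  "'b set \<Rightarrow> ('b \<Rightarrow> 'b \<Rightarrow> bool) \<Rightarrow> ('b \<Rightarrow> 'b \<Rightarrow> bool) \<Rightarrow>
   'a set \<Rightarrow> ('a \<Rightarrow> 'a \<Rightarrow> bool) \<Rightarrow> ('a \<Rightarrow> 'a \<Rightarrow> bool) \<Rightarrow> ('b \<Rightarrow> 'a) \<Rightarrow> ('a \<Rightarrow> 'b) \<Rightarrow> bool" where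
  "rigid_surj_inj T leT loT S leS loS f e \<longleftrightarrow>
     f ` T \<subseteq> S \<and> ot_morphism S leS loS T leT loT e \<and>
     (\<forall>x\<in>S. f (e x) = x) \<and> (\<forall>w\<in>T. leT (e (f w)) w)"

definition A_rigid_surj_inj ::
  "'c set \<Rightarrow> ('c \<Rightarrow> 'c \<Rightarrow> bool) \<Rightarrow>
   'b set \<Rightarrow> ('b \<Rightarrow> 'b \<Rightarrow> bool) \<Rightarrow> ('b \<Rightarrow> 'b \<Rightarrow> bool) \<Rightarrow>
   'a set \<Rightarrow> ('a \<Rightarrow> 'a \<Rightarrow> bool) \<Rightarrow> ('a \<Rightarrow> 'a \<Rightarrow> bool) \<Rightarrow>
   ('c + 'b \<Rightarrow> 'c + 'a) \<Rightarrow> ('c + 'a \<Rightarrow> 'c + 'b) \<Rightarrow> bool" where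
  "A_rigid_surj_inj A leA T leT loT S leS loS s e \<longleftrightarrow>
     rigid_surj_inj (a_plus A T) (a_plus_rel leA leT) (a_plus_rel leA loT)
                    (a_plus A S) (a_plus_rel leA leS) (a_plus_rel leA loS) s e \<and>
     (\<forall>a\<in>A. s (Inl a) = Inl a)"

end

theory Submission
  imports Defs
begin

text \<open>The injection is the identity on \<open>A\<close> and \<open>i\<close> on \<open>S\<close>. The surjection is the identity on
  \<open>A\<close> and sends \<open>t \<in> T\<close> to the \<open>x \<in> S\<close> for which \<open>i x\<close> is the highest point of \<open>i ` S\<close>
  below \<open>t\<close>, or to \<open>max A\<close> if there is none; the predecessors of \<open>t\<close> form a finite chain, so
  this is well defined, it fixes \<open>i ` S\<close> because \<open>i\<close> is injective, and \<open>e (s w) \<sqsubseteq> w\<close> holds by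
  construction. Meets in \<open>A \<oplus> F\<close> are computed from meets in \<open>1 \<oplus> F\<close>, the root of \<open>1 \<oplus> F\<close>
  becoming \<open>max A\<close>, so \<open>e\<close> preserves meets because the extension of \<open>i\<close> to \<open>1 \<oplus> S\<close> does.\<close>

definition is_meet :: "'a set \<Rightarrow> ('a \<Rightarrow> 'a \<Rightarrow> bool) \<Rightarrow> 'a \<Rightarrow> 'a \<Rightarrow> 'a \<Rightarrow> bool" where
  "is_meet X le v w m \<longleftrightarrow> m \<in> X \<and> le m v \<and> le m w \<and> (\<forall>u\<in>X. le u v \<and> le u w \<longrightarrow> le u m)"

lemma tmeet_eqI:
  assumes "porder_on X le" "is_meet X le v w m"
  shows "tmeet X le v w = m"
proof -
  have antisym: "\<forall>a\<in>X. \<forall>b\<in>X. le a b \<and> le b a \<longrightarrow> a = b"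
    using assms(1) unfolding porder_on_def by blast
  show ?thesis unfolding tmeet_def
    by (rule the_equality) (use antisym assms(2) in \<open>unfold is_meet_def, blast+\<close>)
qed

lemma tmeet_commute: "tmeet X le v w = tmeet X le w v"
  unfolding tmeet_def by (intro arg_cong[where f = The] ext) blast

lemma finite_chain_has_greatest:
  assumes "finite L" "L \<noteq> {}"
    and "\<forall>x\<in>L. \<forall>y\<in>L. R x y \<or> R y x"
    and "\<forall>x\<in>L. \<forall>y\<in>L. \<forall>z\<in>L. R x y \<and> R y z \<longrightarrow> R x z"
  shows "\<exists>m\<in>L. \<forall>u\<in>L. R u m"
  using assms
proof (induction L rule: finite_ne_induct)
  case (singleton x)
  then show ?case by blast
next
  case (insert x F)
  have "\<forall>x\<in>F. \<forall>y\<in>F. R x y \<or> R y x" "\<forall>x\<in>F. \<forall>y\<in>F. \<forall>z\<in>F. R x y \<and> R y z \<longrightarrow> R x z"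
    using insert.prems by blast+
  with insert.IH obtain m where m: "m \<in> F" "\<forall>u\<in>F. R u m" by blast
  show ?case
  proof (cases "R m x")
    case True
    then have "\<forall>u\<in>insert x F. R u x"
      using m insert.prems by (metis insert_iff)
    then show ?thesis by blast
  next
    case False
    then have "R x m" using insert.prems m by blast
    then show ?thesis using m by blast
  qed
qed

lemma tree_is_meet_tmeet:
  assumes "tree X le" "v \<in> X" "w \<in> X"
  shows "is_meet X le v w (tmeet X le v w)"
proof -
  from assms(1) have fin: "finite X" and po: "porder_on X le" and root: "\<exists>r\<in>X. \<forall>w\<in>X. le r w"
    and chain: "\<forall>w\<in>X. \<forall>u\<in>X. \<forall>v\<in>X. le u w \<and> le v w \<longrightarrow> le u v \<or> le v u"
    by (auto simp: tree_def forest_def)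
  let ?L = "{u\<in>X. le u v \<and> le u w}"
  have "\<exists>m\<in>?L. \<forall>u\<in>?L. le u m"
  proof (rule finite_chain_has_greatest)
    show "finite ?L" using fin by simp
    show "?L \<noteq> {}" using root assms(2,3) by blast
    show "\<forall>x\<in>?L. \<forall>y\<in>?L. le x y \<or> le y x" using chain assms(2) by blast
    show "\<forall>x\<in>?L. \<forall>y\<in>?L. \<forall>z\<in>?L. le x y \<and> le y z \<longrightarrow> le x z"
      using po unfolding porder_on_def by blast
  qed
  then obtain m where "is_meet X le v w m" unfolding is_meet_def by blast
  then show ?thesis using tmeet_eqI[OF po] by simp
qed

lemma a_plus_rel_simps [simp]:
  "a_plus_rel leA le (Inl a) (Inl b) = leA a b"
  "a_plus_rel leA le (Inl a) (Inr t) = True"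
  "a_plus_rel leA le (Inr s) (Inl b) = False"
  "a_plus_rel leA le (Inr s) (Inr t) = le s t"
  by (simp_all add: a_plus_rel_def)

lemma a_plus_simps [simp]:
  "Inl a \<in> a_plus A F \<longleftrightarrow> a \<in> A"
  "Inr t \<in> a_plus A F \<longleftrightarrow> t \<in> F"
  by (auto simp: a_plus_def)

lemma a_plusE [elim!]:
  assumes "x \<in> a_plus A F"
  obtains a where "x = Inl a" "a \<in> A" | t where "x = Inr t" "t \<in> F"
  using assms unfolding a_plus_def by blast

lemma porder_on_a_plus:
  assumes "porder_on A leA" "porder_on F le"
  shows "porder_on (a_plus A F) (a_plus_rel leA le)"
proof -
  have A: "\<And>a. a \<in> A \<Longrightarrow> leA a a"
    "\<And>a b. \<lbrakk>a \<in> A; b \<in> A; leA a b; leA b a\<rbrakk> \<Longrightarrow> a = b"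
    "\<And>a b c. \<lbrakk>a \<in> A; b \<in> A; c \<in> A; leA a b; leA b c\<rbrakk> \<Longrightarrow> leA a c"
    using assms(1) unfolding porder_on_def by blast+
  have F: "\<And>s. s \<in> F \<Longrightarrow> le s s"
    "\<And>s t. \<lbrakk>s \<in> F; t \<in> F; le s t; le t s\<rbrakk> \<Longrightarrow> s = t"
    "\<And>s t u. \<lbrakk>s \<in> F; t \<in> F; u \<in> F; le s t; le t u\<rbrakk> \<Longrightarrow> le s u"
    using assms(2) unfolding porder_on_def by blast+
  show ?thesis
    unfolding porder_on_def
  proof (intro conjI ballI impI)
    fix x y z assume xyz: "x \<in> a_plus A F" "y \<in> a_plus A F" "z \<in> a_plus A F"
    from xyz(1) show "a_plus_rel leA le x x"
      by (elim a_plusE) (simp_all add: A(1) F(1))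
    show "x = y" if "a_plus_rel leA le x y \<and> a_plus_rel leA le y x"
      using xyz(1,2) that by (elim a_plusE) (auto intro: A(2) F(2))
    show "a_plus_rel leA le x z" if "a_plus_rel leA le x y \<and> a_plus_rel leA le y z"
      using xyz that by (elim a_plusE) (auto intro: A(3) F(3))
  qed
qed

lemma tmeet_a_plus_Inl_Inl:
  assumes "linorder_on A leA" "porder_on F le" "a \<in> A" "b \<in> A"
  shows "tmeet (a_plus A F) (a_plus_rel leA le) (Inl a) (Inl b) = Inl (if leA a b then a else b)"
proof (rule tmeet_eqI)
  show "porder_on (a_plus A F) (a_plus_rel leA le)"
    using assms(1,2) porder_on_a_plus linorder_on_def by blast
  have "leA a a" "leA b b" "leA a b \<or> leA b a"
    using assms(1,3,4) unfolding linorder_on_def porder_on_def by blast+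
  then show "is_meet (a_plus A F) (a_plus_rel leA le) (Inl a) (Inl b) (Inl (if leA a b then a else b))"
    using assms(3,4) unfolding is_meet_def by (auto)
qed

lemma tmeet_a_plus_Inl_Inr:
  assumes "porder_on A leA" "porder_on F le" "a \<in> A"
  shows "tmeet (a_plus A F) (a_plus_rel leA le) (Inl a) (Inr x) = Inl a"
proof (rule tmeet_eqI)
  show "porder_on (a_plus A F) (a_plus_rel leA le)"
    using assms(1,2) by (rule porder_on_a_plus)
  have "leA a a"
    using assms(1,3) unfolding porder_on_def by blast
  then show "is_meet (a_plus A F) (a_plus_rel leA le) (Inl a) (Inr x) (Inl a)"
    using assms(3) unfolding is_meet_def by simp
qed

lemma tmeet_a_plus_Inr_Inr:
  assumes "porder_on A leA" "porder_on F le" "tree (one_plus F) (one_plus_rel le)"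
    and "amax \<in> A" "\<forall>c\<in>A. leA c amax" "x \<in> F" "y \<in> F"
  shows "tmeet (a_plus A F) (a_plus_rel leA le) (Inr x) (Inr y) =
    case_option (Inl amax) Inr (tmeet (one_plus F) (one_plus_rel le) (Some x) (Some y))"
proof (rule tmeet_eqI)
  show "porder_on (a_plus A F) (a_plus_rel leA le)"
    using assms(1,2) by (rule porder_on_a_plus)
  obtain M where M: "tmeet (one_plus F) (one_plus_rel le) (Some x) (Some y) = M"
    by simp
  have meet: "is_meet (one_plus F) (one_plus_rel le) (Some x) (Some y) M"
    unfolding M[symmetric] using assms(3,6,7) by (intro tree_is_meet_tmeet) (auto simp: one_plus_def)
  have "is_meet (a_plus A F) (a_plus_rel leA le) (Inr x) (Inr y) (case_option (Inl amax) Inr M)"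
  proof (cases M)
    case None
    then have "\<forall>z\<in>F. \<not> (le z x \<and> le z y)"
      using meet by (auto simp: is_meet_def one_plus_def one_plus_rel_def)
    then show ?thesis
      using None assms(4,5) by (auto simp: is_meet_def)
  next
    case (Some m)
    then have "m \<in> F" "le m x" "le m y" "\<forall>z\<in>F. le z x \<and> le z y \<longrightarrow> le z m"
      using meet by (auto simp: is_meet_def one_plus_def one_plus_rel_def)
    then show ?thesis
      using Some by (auto simp: is_meet_def)
  qed
  then show "is_meet (a_plus A F) (a_plus_rel leA le) (Inr x) (Inr y)
      (case_option (Inl amax) Inr (tmeet (one_plus F) (one_plus_rel le) (Some x) (Some y)))"
    unfolding M .
qed

lemma troot_one_plus: "troot (one_plus F) (one_plus_rel le) = None"
  unfolding troot_def
  by (rule the_equality) (auto simp: one_plus_def one_plus_rel_def split: option.splits)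

lemma troot_a_plus:
  assumes "porder_on A leA" "amin \<in> A" "\<forall>c\<in>A. leA amin c"
  shows "troot (a_plus A F) (a_plus_rel leA le) = Inl amin"
  unfolding troot_def
proof (rule the_equality)
  show "Inl amin \<in> a_plus A F \<and> (\<forall>w\<in>a_plus A F. a_plus_rel leA le (Inl amin) w)"
    using assms(2,3) by auto
  fix r assume "r \<in> a_plus A F \<and> (\<forall>w\<in>a_plus A F. a_plus_rel leA le r w)"
  then have "r \<in> a_plus A F" "a_plus_rel leA le r (Inl amin)"
    using assms(2) by simp_all
  then show "r = Inl amin"
  proof (elim a_plusE)
    fix a assume "r = Inl a" "a \<in> A"
    with \<open>a_plus_rel leA le r (Inl amin)\<close> have "leA a amin" "leA amin a"
      using assms(3) by simp_all
    then show ?thesis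
      using \<open>r = Inl a\<close> \<open>a \<in> A\<close> assms(1,2) unfolding porder_on_def by blast
  qed (use \<open>a_plus_rel leA le r (Inl amin)\<close> in simp)
qed

lemma tree_embedding_extension:
  assumes "tree_embedding S leS loS T leT loT i"
  obtains e where
    "ot_embedding (one_plus S) (one_plus_rel leS) (one_plus_rel loS)
       (one_plus T) (one_plus_rel leT) (one_plus_rel loT) e"
    "e None = None" "\<And>x. x \<in> S \<Longrightarrow> e (Some x) = Some (i x)"
proof -
  from assms obtain e where e: "ot_embedding (one_plus S) (one_plus_rel leS) (one_plus_rel loS)
      (one_plus T) (one_plus_rel leT) (one_plus_rel loT) e" "\<forall>x\<in>S. e (Some x) = Some (i x)"
    unfolding tree_embedding_def by blast
  moreover from e(1) have "e None = None"
    unfolding ot_embedding_def ot_morphism_def by (simp add: troot_one_plus)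
  ultimately show ?thesis using that by blast
qed

lemma tree_embedding_inj_on:
  assumes "tree_embedding S leS loS T leT loT i"
  shows "inj_on i S"
proof (rule inj_onI)
  obtain e where e: "inj_on e (one_plus S)" "\<And>x. x \<in> S \<Longrightarrow> e (Some x) = Some (i x)"
    using tree_embedding_extension[OF assms] unfolding ot_embedding_def by metis
  fix x y assume "x \<in> S" "y \<in> S" "i x = i y"
  then have "e (Some x) = e (Some y)" using e(2) by simp
  with e(1) \<open>x \<in> S\<close> \<open>y \<in> S\<close> show "x = y" by (auto simp: one_plus_def inj_on_def)
qed

lemma tree_embedding_mono:
  assumes "tree_embedding S leS loS T leT loT i" "x \<in> S" "y \<in> S" "loS x y"
  shows "loT (i x) (i y)"
proof -
  obtain e where "ot_morphism (one_plus S) (one_plus_rel leS) (one_plus_rel loS)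
      (one_plus T) (one_plus_rel leT) (one_plus_rel loT) e" "\<And>x. x \<in> S \<Longrightarrow> e (Some x) = Some (i x)"
    using tree_embedding_extension[OF assms(1)] unfolding ot_embedding_def by metis
  with assms(2-4) show ?thesis
    unfolding ot_morphism_def by (force simp: one_plus_def one_plus_rel_def)
qed

lemma tree_embedding_tmeet:
  assumes "tree_embedding S leS loS T leT loT i" "tree (one_plus S) (one_plus_rel leS)"
    and "x \<in> S" "y \<in> S"
  shows "tmeet (one_plus T) (one_plus_rel leT) (Some (i x)) (Some (i y)) =
    map_option i (tmeet (one_plus S) (one_plus_rel leS) (Some x) (Some y))"
proof -
  obtain e where e: "ot_morphism (one_plus S) (one_plus_rel leS) (one_plus_rel loS)
      (one_plus T) (one_plus_rel leT) (one_plus_rel loT) e"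
      "e None = None" "\<And>x. x \<in> S \<Longrightarrow> e (Some x) = Some (i x)"
    using tree_embedding_extension[OF assms(1)] unfolding ot_embedding_def by metis
  let ?M = "tmeet (one_plus S) (one_plus_rel leS) (Some x) (Some y)"
  have "?M \<in> one_plus S"
    using tree_is_meet_tmeet[OF assms(2)] assms(3,4) by (simp add: is_meet_def one_plus_def)
  then have "e ?M = map_option i ?M"
    using e(2,3) by (auto simp: one_plus_def)
  moreover have "e ?M = tmeet (one_plus T) (one_plus_rel leT) (Some (i x)) (Some (i y))"
    using e(1,3) assms(3,4) unfolding ot_morphism_def by (simp add: one_plus_def)
  ultimately show ?thesis by simp
qed

lemma ot_morphism_a_plus_map_sum:
  assumes S: "ordered_forest S leS loS" and T: "ordered_forest T leT loT"
    and A: "linorder_on A leA" "amin \<in> A" "\<forall>c\<in>A. leA amin c" "amax \<in> A" "\<forall>c\<in>A. leA c amax"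
    and i: "tree_embedding S leS loS T leT loT i"
  shows "ot_morphism (a_plus A S) (a_plus_rel leA leS) (a_plus_rel leA loS)
    (a_plus A T) (a_plus_rel leA leT) (a_plus_rel leA loT) (map_sum id i)"
proof -
  have poA: "porder_on A leA" using A(1) by (simp add: linorder_on_def)
  have poS: "porder_on S leS" and tS: "tree (one_plus S) (one_plus_rel leS)"
    using S by (simp_all add: ordered_forest_def ordered_tree_def forest_def)
  have poT: "porder_on T leT" and tT: "tree (one_plus T) (one_plus_rel leT)"
    using T by (simp_all add: ordered_forest_def ordered_tree_def forest_def)
  have iST: "i ` S \<subseteq> T" using i by (simp add: tree_embedding_def)
  have meet: "map_sum id i (tmeet (a_plus A S) (a_plus_rel leA leS) v w) =
      tmeet (a_plus A T) (a_plus_rel leA leT) (map_sum id i v) (map_sum id i w)"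
    if "v \<in> a_plus A S" "w \<in> a_plus A S" for v w
    using that
  proof (elim a_plusE)
    fix a b assume "v = Inl a" "a \<in> A" "w = Inl b" "b \<in> A"
    then show ?thesis using A(1) poS poT by (simp add: tmeet_a_plus_Inl_Inl)
  next
    fix a y assume "v = Inl a" "a \<in> A" "w = Inr y"
    then show ?thesis using poA poS poT by (simp add: tmeet_a_plus_Inl_Inr)
  next
    fix x b assume "v = Inr x" "w = Inl b" "b \<in> A"
    then show ?thesis using poA poS poT by (simp add: tmeet_commute[of _ _ "Inr _"] tmeet_a_plus_Inl_Inr)
  next
    fix x y assume "v = Inr x" "x \<in> S" "w = Inr y" "y \<in> S"
    moreover have "i x \<in> T" "i y \<in> T" using iST \<open>x \<in> S\<close> \<open>y \<in> S\<close> by auto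
    ultimately show ?thesis
      using tmeet_a_plus_Inr_Inr[OF poA poS tS A(4,5)] tmeet_a_plus_Inr_Inr[OF poA poT tT A(4,5)]
        tree_embedding_tmeet[OF i tS]
      by (simp split: option.split)
  qed
  have mono: "a_plus_rel leA loT (map_sum id i v) (map_sum id i w)"
    if "v \<in> a_plus A S" "w \<in> a_plus A S" "a_plus_rel leA loS v w" for v w
    using that by (elim a_plusE) (simp_all add: tree_embedding_mono[OF i])
  show ?thesis
    unfolding ot_morphism_def
    using iST meet mono by (auto simp: troot_a_plus[OF poA A(2,3)])
qed

definition image_floor :: "'a set \<Rightarrow> ('b \<Rightarrow> 'b \<Rightarrow> bool) \<Rightarrow> ('a \<Rightarrow> 'b) \<Rightarrow> 'b \<Rightarrow> 'a" where
  "image_floor S le i t = (SOME x. x \<in> S \<and> le (i x) t \<and> (\<forall>y\<in>S. le (i y) t \<longrightarrow> le (i y) (i x)))"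

lemma image_floor:
  assumes "forest T le" "finite S" "i ` S \<subseteq> T" "t \<in> T" "\<exists>x\<in>S. le (i x) t"
  shows "image_floor S le i t \<in> S" "le (i (image_floor S le i t)) t"
    and "\<And>y. y \<in> S \<Longrightarrow> le (i y) t \<Longrightarrow> le (i y) (i (image_floor S le i t))"
proof -
  from assms(1) have po: "porder_on T le"
    and chain: "\<forall>w\<in>T. \<forall>u\<in>T. \<forall>v\<in>T. le u w \<and> le v w \<longrightarrow> le u v \<or> le v u"
    by (simp_all add: forest_def)
  let ?L = "{x\<in>S. le (i x) t}"
  have "\<exists>m\<in>?L. \<forall>u\<in>?L. le (i u) (i m)"
  proof (rule finite_chain_has_greatest)
    show "finite ?L" using assms(2) by simp
    show "?L \<noteq> {}" using assms(5) by blast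
    show "\<forall>x\<in>?L. \<forall>y\<in>?L. le (i x) (i y) \<or> le (i y) (i x)"
      using chain assms(3,4) by blast
    show "\<forall>x\<in>?L. \<forall>y\<in>?L. \<forall>z\<in>?L. le (i x) (i y) \<and> le (i y) (i z) \<longrightarrow> le (i x) (i z)"
      using po assms(3) unfolding porder_on_def by blast
  qed
  then have "\<exists>x. x \<in> S \<and> le (i x) t \<and> (\<forall>y\<in>S. le (i y) t \<longrightarrow> le (i y) (i x))"
    by blast
  from someI_ex[OF this] show "image_floor S le i t \<in> S" "le (i (image_floor S le i t)) t"
    and "\<And>y. y \<in> S \<Longrightarrow> le (i y) t \<Longrightarrow> le (i y) (i (image_floor S le i t))"
    unfolding image_floor_def by blast+
qed

lemma image_floor_image:
  assumes "forest T le" "finite S" "i ` S \<subseteq> T" "inj_on i S" "x \<in> S"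
  shows "image_floor S le i (i x) = x"
proof -
  have po: "porder_on T le" using assms(1) by (simp add: forest_def)
  have ix: "i x \<in> T" using assms(3,5) by blast
  have "le (i x) (i x)" using po ix unfolding porder_on_def by blast
  then have "\<exists>y\<in>S. le (i y) (i x)" using assms(5) by blast
  note floor = image_floor[OF assms(1-3) ix this]
  have "i (image_floor S le i (i x)) = i x"
    using po floor(1,2) floor(3)[OF assms(5) \<open>le (i x) (i x)\<close>] ix assms(3)
    unfolding porder_on_def by blast
  then show ?thesis using inj_onD[OF assms(4)] floor(1) assms(5) by blast
qed

definition a_plus_retraction :: "'c \<Rightarrow> 'a set \<Rightarrow> ('b \<Rightarrow> 'b \<Rightarrow> bool) \<Rightarrow> ('a \<Rightarrow> 'b) \<Rightarrow> 'c + 'b \<Rightarrow> 'c + 'a" where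
  "a_plus_retraction amax S le i w = (case w of
      Inl a \<Rightarrow> Inl a
    | Inr t \<Rightarrow> if \<exists>x\<in>S. le (i x) t then Inr (image_floor S le i t) else Inl amax)"

lemma rigid_surj_inj_a_plus_retraction:
  assumes T: "forest T leT" and S: "finite S" "i ` S \<subseteq> T" "inj_on i S"
    and A: "porder_on A leA" "amax \<in> A"
    and e: "ot_morphism (a_plus A S) (a_plus_rel leA leS) (a_plus_rel leA loS)
      (a_plus A T) (a_plus_rel leA leT) (a_plus_rel leA loT) (map_sum id i)"
  shows "rigid_surj_inj (a_plus A T) (a_plus_rel leA leT) (a_plus_rel leA loT)
    (a_plus A S) (a_plus_rel leA leS) (a_plus_rel leA loS)
    (a_plus_retraction amax S leT i) (map_sum id i)"
proof -
  let ?s = "a_plus_retraction amax S leT i"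
  have retract: "?s w \<in> a_plus A S \<and> a_plus_rel leA leT (map_sum id i (?s w)) w"
    if "w \<in> a_plus A T" for w
    using that
  proof (elim a_plusE)
    fix a assume "w = Inl a" "a \<in> A"
    moreover have "leA a a" using A(1) \<open>a \<in> A\<close> unfolding porder_on_def by blast
    ultimately show ?thesis by (simp add: a_plus_retraction_def)
  next
    fix t assume "w = Inr t" "t \<in> T"
    then show ?thesis
      using image_floor(1,2)[OF T S(1,2) \<open>t \<in> T\<close>] A(2) by (simp add: a_plus_retraction_def)
  qed
  have left_inverse: "?s (map_sum id i v) = v" if "v \<in> a_plus A S" for v
    using that
  proof (elim a_plusE)
    fix x assume "v = Inr x" "x \<in> S"
    moreover have "leT (i x) (i x)"
      using T S(2) \<open>x \<in> S\<close> unfolding forest_def porder_on_def by blast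
    ultimately show ?thesis
      using image_floor_image[OF T S] by (auto simp: a_plus_retraction_def)
  qed (simp add: a_plus_retraction_def)
  show ?thesis
    unfolding rigid_surj_inj_def
    by (intro conjI image_subsetI ballI) (simp_all add: retract left_inverse e)
qed

theorem lemma4p10:
  fixes S :: "'a set" and leS loS :: "'a \<Rightarrow> 'a \<Rightarrow> bool"
    and T :: "'b set" and leT loT :: "'b \<Rightarrow> 'b \<Rightarrow> bool"
    and A :: "'c set" and leA :: "'c \<Rightarrow> 'c \<Rightarrow> bool"
    and i :: "'a \<Rightarrow> 'b"
  assumes "ordered_forest S leS loS"
    and "ordered_forest T leT loT"
    and "finite A" and "A \<noteq> {}" and "linorder_on A leA"
    and "tree_embedding S leS loS T leT loT i"
  shows "\<exists>s e. A_rigid_surj_inj A leA T leT loT S leS loS s e \<and>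
                (\<forall>x\<in>S. e (Inr x) = Inr (i x))"
proof -
  have poA: "porder_on A leA" and totA: "\<forall>x\<in>A. \<forall>y\<in>A. leA x y \<or> leA y x"
    using assms(5) by (simp_all add: linorder_on_def)
  obtain amax where amax: "amax \<in> A" "\<forall>c\<in>A. leA c amax"
    using finite_chain_has_greatest[of A leA] assms(3,4) totA poA unfolding porder_on_def by blast
  obtain amin where amin: "amin \<in> A" "\<forall>c\<in>A. leA amin c"
    using finite_chain_has_greatest[of A "\<lambda>x y. leA y x"] assms(3,4) totA poA
    unfolding porder_on_def by blast
  have T: "forest T leT" and S: "finite S"
    using assms(1,2) by (simp_all add: ordered_forest_def forest_def)
  have iST: "i ` S \<subseteq> T" using assms(6) by (simp add: tree_embedding_def)
  have "rigid_surj_inj (a_plus A T) (a_plus_rel leA leT) (a_plus_rel leA loT)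
      (a_plus A S) (a_plus_rel leA leS) (a_plus_rel leA loS)
      (a_plus_retraction amax S leT i) (map_sum id i)"
    by (rule rigid_surj_inj_a_plus_retraction[OF T S iST tree_embedding_inj_on[OF assms(6)]
          poA amax(1) ot_morphism_a_plus_map_sum[OF assms(1,2,5) amin amax assms(6)]])
  then have "A_rigid_surj_inj A leA T leT loT S leS loS (a_plus_retraction amax S leT i) (map_sum id i)"
    by (simp add: A_rigid_surj_inj_def a_plus_retraction_def)
  moreover have "\<forall>x\<in>S. map_sum id i (Inr x) = Inr (i x)"
    by simp
  ultimately show ?thesis by blast
qed

end
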